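(* For every $a,b,c,d>0$ such that $b<c+d$, one has $$\left(1+\mathbf{B}'_{a,b}\right)\times\left(1+\mathbf{B}'_{c,d}\right)-1\;\stackrel{d}{=}\;\mathbf{B}'_{a+c,d}\times\left(1+\mathbf{B}_{a,c}\,\mathbf{B}'_{c+d-b,b}\right),$$ where all random variables appearing on the same side of the identity are independent.
   Context: For $p,q>0$, $\mathbf{B}_{p,q}$ denotes a beta random variable with density $\frac{\Gamma(p+q)}{\Gamma(p)\Gamma(q)}x^{p-1}(1-x)^{q-1}$ on $(0,1)$, and $\mathbf{B}'_{p,q}$ a beta prime random variable with density $\frac{\Gamma(p+q)}{\Gamma(p)\Gamma(q)}\frac{x^{p-1}}{(1+x)^{p+q}}$ on $(0,\infty)$. $\stackrel{d}{=}$ denotes equality in distribution. *)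

theory Defs
  imports "HOL-Probability.Probability"
begin

definition beta_density :: "real \<Rightarrow> real \<Rightarrow> real \<Rightarrow> real" where
  "beta_density p q x =
     (if 0 < x \<and> x < 1
      then Gamma (p + q) / (Gamma p * Gamma q) * x powr (p - 1) * (1 - x) powr (q - 1)
      else 0)"

definition beta_prime_density :: "real \<Rightarrow> real \<Rightarrow> real \<Rightarrow> real" where
  "beta_prime_density p q x =
     (if 0 < x
      then Gamma (p + q) / (Gamma p * Gamma q) * x powr (p - 1) / (1 + x) powr (p + q)
      else 0)"

definition beta_measure :: "real \<Rightarrow> real \<Rightarrow> real measure" where
  "beta_measure p q = density lborel (\<lambda>x. ennreal (beta_density p q x))"

definition beta_prime_measure :: "real \<Rightarrow> real \<Rightarrow> real measure" where
  "beta_prime_measure p q = density lborel (\<lambda>x. ennreal (beta_prime_density p q x))"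

end

theory Submission
  imports Defs
begin

(*
  Write the beta variable as U = V / (1 + V) with V ~ B'(a,c). Two linear substitutions show
  that if Q ~ B'(c,d) and R ~ B'(a,c+d) are independent, then Z = Q + (1 + Q) R and
  V = (1 + Q) R / Q are independent with laws B'(a+c,d) and B'(a,c). In these coordinates
  Z (1 + U T) = Q + (1 + Q) R (1 + T). Finally R (1 + T) ~ B'(a,b) for T ~ B'(c+d-b,b), since
  B'(a,b) is the mixture over t of the laws of (1 + t) R, so the right-hand side is
  (1 + Q)(1 + X) - 1 with X ~ B'(a,b) independent of Q.
*)

lemma Beta_real_pos: "0 < a \<Longrightarrow> 0 < b \<Longrightarrow> 0 < Beta a (b::real)"
  unfolding Beta_def by simp

lemma Beta_mult_Beta:
  fixes x y z :: real
  assumes "0 < x" "0 < y" "0 < z"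
  shows "Beta x (y + z) * Beta y z = Gamma x * Gamma y * Gamma z / Gamma (x + y + z)"
proof -
  have "Gamma (y + z) \<noteq> 0" "Gamma (x + (y + z)) \<noteq> 0"
    using assms by (simp_all add: Gamma_real_pos less_imp_neq[symmetric])
  then show ?thesis using assms by (simp add: Beta_def add.assoc field_simps)
qed

lemma emeasure_distr_eq_nn_integral:
  assumes "f \<in> measurable M N" "A \<in> sets N"
  shows "emeasure (distr M N f) A = (\<integral>\<^sup>+x. indicator A (f x) \<partial>M)"
proof -
  have "emeasure (distr M N f) A = (\<integral>\<^sup>+y. indicator A y \<partial>distr M N f)"
    using assms by simp
  also have "\<dots> = (\<integral>\<^sup>+x. indicator A (f x) \<partial>M)"
    using assms by (intro nn_integral_distr) auto
  finally show ?thesis .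
qed

lemma nn_integral_change_of_variables_real:
  fixes f g g' :: "real \<Rightarrow> real"
  assumes S: "S \<in> sets lebesgue"
    and deriv: "\<And>x. x \<in> S \<Longrightarrow> (g has_field_derivative g' x) (at x within S)"
    and inj: "inj_on g S" and f: "f absolutely_integrable_on g ` S"
    and nonneg: "\<And>y. y \<in> g ` S \<Longrightarrow> 0 \<le> f y"
  shows "(\<integral>\<^sup>+y. ennreal (f y) * indicator (g ` S) y \<partial>lborel)
       = (\<integral>\<^sup>+x. ennreal (\<bar>g' x\<bar> * f (g x)) * indicator S x \<partial>lborel)"
proof -
  define I where "I = integral (g ` S) f"
  have "(f has_integral I) (g ` S)"
    using f by (simp add: I_def absolutely_integrable_on_def has_integral_integral)
  moreover have "(\<lambda>x. \<bar>g' x\<bar> * f (g x)) absolutely_integrable_on S"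
    and "integral S (\<lambda>x. \<bar>g' x\<bar> * f (g x)) = I"
    using has_absolute_integral_change_of_variables_real[OF S deriv inj, of f I] f
    by (simp_all add: I_def)
  then have "((\<lambda>x. \<bar>g' x\<bar> * f (g x)) has_integral I) S"
    by (metis absolutely_integrable_on_def has_integral_integral)
  ultimately show ?thesis
    using nonneg by (simp add: nn_integral_has_integral_lebesgue')
qed

lemma nn_integral_lborel_rescale:
  fixes c :: real
  assumes "0 < c" and [measurable]: "F \<in> borel_measurable borel" "g \<in> borel_measurable borel"
  shows "(\<integral>\<^sup>+x. ennreal (F x) * g x \<partial>lborel) = (\<integral>\<^sup>+x. ennreal (c * F (c * x)) * g (c * x) \<partial>lborel)"
  using nn_integral_real_affine[of "\<lambda>x. ennreal (F x) * g x" c 0] assms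
  by (simp add: nn_integral_cmult[symmetric] ennreal_mult' mult.assoc)

lemma distr_pair_measure_assoc:
  assumes "sigma_finite_measure M" "sigma_finite_measure N" "sigma_finite_measure L"
    and [measurable]: "f \<in> measurable (M \<Otimes>\<^sub>M (N \<Otimes>\<^sub>M L)) K"
  shows "distr (M \<Otimes>\<^sub>M (N \<Otimes>\<^sub>M L)) K f = distr ((M \<Otimes>\<^sub>M N) \<Otimes>\<^sub>M L) K (\<lambda>((x, y), z). f (x, y, z))"
proof (rule measure_eqI)
  interpret N: sigma_finite_measure N by fact
  interpret L: sigma_finite_measure L by fact
  interpret NL: sigma_finite_measure "N \<Otimes>\<^sub>M L" by (rule sigma_finite_pair_measure) fact+
  fix A assume "A \<in> sets (distr (M \<Otimes>\<^sub>M (N \<Otimes>\<^sub>M L)) K f)"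
  then have [measurable]: "A \<in> sets K" by simp
  have "emeasure (distr (M \<Otimes>\<^sub>M (N \<Otimes>\<^sub>M L)) K f) A
      = (\<integral>\<^sup>+\<omega>. indicator A (f \<omega>) \<partial>(M \<Otimes>\<^sub>M (N \<Otimes>\<^sub>M L)))"
    by (simp add: emeasure_distr_eq_nn_integral)
  also have "\<dots> = (\<integral>\<^sup>+x. \<integral>\<^sup>+w. indicator A (f (x, w)) \<partial>(N \<Otimes>\<^sub>M L) \<partial>M)"
    by (rule NL.nn_integral_fst[symmetric]) measurable
  also have "\<dots> = (\<integral>\<^sup>+x. \<integral>\<^sup>+y. \<integral>\<^sup>+z. indicator A (f (x, y, z)) \<partial>L \<partial>N \<partial>M)"
    by (intro nn_integral_cong L.nn_integral_fst[symmetric]) measurable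
  also have "\<dots> = (\<integral>\<^sup>+(x, y). \<integral>\<^sup>+z. indicator A (f (x, y, z)) \<partial>L \<partial>(M \<Otimes>\<^sub>M N))"
    by (rule N.nn_integral_fst[where f = "\<lambda>(x, y). \<integral>\<^sup>+z. indicator A (f (x, y, z)) \<partial>L", simplified]) measurable
  also have "\<dots> = emeasure (distr ((M \<Otimes>\<^sub>M N) \<Otimes>\<^sub>M L) K (\<lambda>((x, y), z). f (x, y, z))) A"
    by (simp add: emeasure_distr_eq_nn_integral L.nn_integral_fst[symmetric] split_beta')
  finally show "emeasure (distr (M \<Otimes>\<^sub>M (N \<Otimes>\<^sub>M L)) K f) A
      = emeasure (distr ((M \<Otimes>\<^sub>M N) \<Otimes>\<^sub>M L) K (\<lambda>((x, y), z). f (x, y, z))) A" .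
qed simp

lemma distr_pair_measure_distr_left:
  assumes "sigma_finite_measure N" and [measurable]: "g \<in> measurable M M'" "f \<in> measurable (M' \<Otimes>\<^sub>M N) K"
  shows "distr (distr M M' g \<Otimes>\<^sub>M N) K f = distr (M \<Otimes>\<^sub>M N) K (\<lambda>(x, y). f (g x, y))"
proof -
  have "distr M M' g \<Otimes>\<^sub>M N = distr (M \<Otimes>\<^sub>M N) (M' \<Otimes>\<^sub>M N) (\<lambda>(x, y). (g x, y))"
    using pair_measure_distr[of g M M' "\<lambda>y. y" N N] assms by simp
  then show ?thesis by (simp add: distr_distr comp_def split_beta')
qed

lemma distr_pair_measure_distr_right:
  assumes "sigma_finite_measure (distr N N' g)"
    and [measurable]: "g \<in> measurable N N'" "f \<in> measurable (M \<Otimes>\<^sub>M N') K"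
  shows "distr (M \<Otimes>\<^sub>M distr N N' g) K f = distr (M \<Otimes>\<^sub>M N) K (\<lambda>(x, y). f (x, g y))"
proof -
  have "M \<Otimes>\<^sub>M distr N N' g = distr (M \<Otimes>\<^sub>M N) (M \<Otimes>\<^sub>M N') (\<lambda>(x, y). (x, g y))"
    using pair_measure_distr[of "\<lambda>x. x" M M g N N'] assms by simp
  then show ?thesis by (simp add: distr_distr comp_def split_beta')
qed

lemma distr_pair_measure_swap:
  assumes "sigma_finite_measure M" "sigma_finite_measure N"
    and [measurable]: "f \<in> measurable (M \<Otimes>\<^sub>M N) K"
  shows "distr (M \<Otimes>\<^sub>M N) K f = distr (N \<Otimes>\<^sub>M M) K (\<lambda>(y, x). f (x, y))"
proof -
  interpret pair_sigma_finite M N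
    using assms by (simp add: pair_sigma_finite_def)
  show ?thesis
    by (subst distr_pair_swap) (simp add: distr_distr comp_def split_beta')
qed

lemma AE_pair_measure_fst_snd:
  assumes "sigma_finite_measure M" "sigma_finite_measure N"
    and "AE x in M. P x" "AE y in N. Q y"
    and [measurable]: "Measurable.pred M P" "Measurable.pred N Q"
  shows "AE \<omega> in M \<Otimes>\<^sub>M N. P (fst \<omega>) \<and> Q (snd \<omega>)"
proof -
  interpret pair_sigma_finite M N
    using assms by (simp add: pair_sigma_finite_def)
  show ?thesis
  proof (rule AE_pair_measure)
    show "AE x in M. AE y in N. P (fst (x, y)) \<and> Q (snd (x, y))"
      using assms(3) by eventually_elim (use assms(4) in \<open>auto elim: eventually_mono\<close>)
  qed measurable
qed

lemma beta_density_eq: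
  "0 < x \<Longrightarrow> x < 1 \<Longrightarrow> beta_density p q x = x powr (p - 1) * (1 - x) powr (q - 1) / Beta p q"
  unfolding beta_density_def Beta_def by (simp add: field_simps)

lemma beta_prime_density_eq:
  "0 < x \<Longrightarrow> beta_prime_density p q x = x powr (p - 1) / ((1 + x) powr (p + q) * Beta p q)"
  unfolding beta_prime_density_def Beta_def by (simp add: field_simps)

lemma beta_prime_density_nonpos [simp]: "x \<le> 0 \<Longrightarrow> beta_prime_density p q x = 0"
  unfolding beta_prime_density_def by simp

lemma beta_density_nonneg [simp]: "0 < p \<Longrightarrow> 0 < q \<Longrightarrow> 0 \<le> beta_density p q x"
  unfolding beta_density_def by (simp add: Gamma_real_pos)

lemma beta_prime_density_nonneg [simp]: "0 < p \<Longrightarrow> 0 < q \<Longrightarrow> 0 \<le> beta_prime_density p q x"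
  unfolding beta_prime_density_def by (simp add: Gamma_real_pos)

lemma beta_density_pos: "0 < x \<Longrightarrow> x < 1 \<Longrightarrow> 0 < p \<Longrightarrow> 0 < q \<Longrightarrow> 0 < beta_density p q x"
  by (simp add: beta_density_eq Beta_real_pos)

lemma beta_prime_density_pos: "0 < x \<Longrightarrow> 0 < p \<Longrightarrow> 0 < q \<Longrightarrow> 0 < beta_prime_density p q x"
  by (simp add: beta_prime_density_eq Beta_real_pos)

lemma ln_beta_prime_density:
  assumes "0 < x" "0 < p" "0 < q"
  shows "ln (beta_prime_density p q x) = (p - 1) * ln x - (p + q) * ln (1 + x) - ln (Beta p q)"
  using assms Beta_real_pos[of p q] by (simp add: beta_prime_density_eq ln_div ln_mult)

lemma borel_measurable_beta_density [measurable]: "beta_density p q \<in> borel_measurable borel"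
  unfolding beta_density_def by measurable

lemma borel_measurable_beta_prime_density [measurable]:
  "beta_prime_density p q \<in> borel_measurable borel"
  unfolding beta_prime_density_def by measurable

lemma sets_beta_measure [measurable_cong, simp]: "sets (beta_measure p q) = sets borel"
  unfolding beta_measure_def by simp

lemma sets_beta_prime_measure [measurable_cong, simp]: "sets (beta_prime_measure p q) = sets borel"
  unfolding beta_prime_measure_def by simp

lemma space_beta_prime_measure [simp]: "space (beta_prime_measure p q) = UNIV"
  unfolding beta_prime_measure_def by simp

lemma sigma_finite_beta_measure: "sigma_finite_measure (beta_measure p q)"
  unfolding beta_measure_def
  by (subst sigma_finite_measure.sigma_finite_iff_density_finite[OF sigma_finite_lborel]) auto

lemma sigma_finite_beta_prime_measure: "sigma_finite_measure (beta_prime_measure p q)"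
  unfolding beta_prime_measure_def
  by (subst sigma_finite_measure.sigma_finite_iff_density_finite[OF sigma_finite_lborel]) auto

lemma AE_beta_prime_measure_pos: "AE x in beta_prime_measure p q. 0 < x"
  unfolding beta_prime_measure_def
  by (subst AE_density) (auto intro!: AE_I2 simp: beta_prime_density_def)

lemma beta_prime_density_eq_beta_density:
  assumes v: "0 < v" and p: "0 < p" and q: "0 < q"
  shows "beta_prime_density p q v = beta_density p q (v / (1 + v)) / (1 + v)^2"
proof -
  have one_minus: "1 - v / (1 + v) = 1 / (1 + v)" using v by (simp add: field_simps)
  have "ln (beta_density p q (v / (1 + v)) / (1 + v)^2) = ln (beta_prime_density p q v)"
    using v p q Beta_real_pos[OF p q]
    by (simp add: ln_beta_prime_density beta_density_eq one_minus ln_div ln_mult ln_realpow)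
       (simp add: algebra_simps)
  then show ?thesis using v p q by (simp add: beta_density_pos beta_prime_density_pos)
qed

(* Jacobian identity of the substitution t = (1 + x) u. *)
lemma beta_prime_density_mixture_identity:
  fixes x u a b e :: real
  assumes x: "0 < x" and u: "0 < u" and a: "0 < a" and b: "0 < b" and e: "0 < e"
  defines "t \<equiv> (1 + x) * u"
  shows "(1 + x) * (beta_prime_density a (e + b) (x / (1 + t)) * beta_prime_density e b t / (1 + t))
       = beta_prime_density a b x * beta_prime_density e (a + b) u"
proof -
  have t: "0 < t" using x u by (simp add: t_def)
  have ln_t: "ln t = ln (1 + x) + ln u" using x u by (simp add: t_def ln_mult_pos)
  have "1 + x / (1 + t) = (1 + x) * (1 + u) / (1 + t)"
    using t by (simp add: t_def field_simps)
  moreover have "Beta a (e + b) * Beta e b = Beta e (a + b) * Beta a b"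
    using Beta_mult_Beta[of a e b] Beta_mult_Beta[of e a b] a b e by (simp add: ac_simps)
  then have "ln (Beta a (e + b)) + ln (Beta e b) = ln (Beta e (a + b)) + ln (Beta a b)"
    using a b e by (simp add: Beta_real_pos flip: ln_mult_pos)
  moreover have "0 < beta_prime_density a (e + b) (x / (1 + t))" "0 < beta_prime_density e b t"
    "0 < beta_prime_density a b x" "0 < beta_prime_density e (a + b) u"
    using x u t a b e by (simp_all add: beta_prime_density_pos)
  ultimately have "ln ((1 + x) * (beta_prime_density a (e + b) (x / (1 + t)) * beta_prime_density e b t / (1 + t)))
      = ln (beta_prime_density a b x * beta_prime_density e (a + b) u)"
    using x u t a b e
    by (simp add: ln_mult_pos ln_divide_pos ln_beta_prime_density) (simp add: ln_t algebra_simps)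
  then show ?thesis using x u t a b e by (simp add: beta_prime_density_pos)
qed

(* Jacobian identity of the substitution z = (1 + v) q, v = (1 + q) r / q. *)
lemma beta_prime_density_pair_identity:
  fixes q r a c d :: real
  assumes q: "0 < q" and r: "0 < r" and a: "0 < a" and c: "0 < c" and d: "0 < d"
  defines "v \<equiv> (1 + q) / q * r"
  shows "(1 + q) / q * ((1 + v) * (beta_prime_density (a + c) d ((1 + v) * q) * beta_prime_density a c v))
       = beta_prime_density c d q * beta_prime_density a (c + d) r"
proof -
  define z where "z = (1 + v) * q"
  have v: "0 < v" using q r by (simp add: v_def)
  have z: "z = q + (1 + q) * r" using q by (simp add: z_def v_def field_simps)
  then have z_pos: "0 < z" using q r by (simp add: add_pos_pos)
  have ln_v: "ln v = ln (1 + q) + ln r - ln q" using q r by (simp add: v_def ln_mult_pos ln_divide_pos)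
  have ln_1v: "ln (1 + v) = ln z - ln q" using q v by (simp add: z_def ln_mult_pos)
  have "1 + z = (1 + q) * (1 + r)" by (simp add: z algebra_simps)
  then have ln_1z: "ln (1 + z) = ln (1 + q) + ln (1 + r)" using q r by (simp add: ln_mult_pos)
  have "Beta (a + c) d * Beta a c = Beta c d * Beta a (c + d)"
    using Beta_mult_Beta[of d a c] Beta_mult_Beta[of a c d] a c d
    by (simp add: Beta_commute[of "a + c"] ac_simps)
  then have "ln (Beta (a + c) d) + ln (Beta a c) = ln (Beta c d) + ln (Beta a (c + d))"
    using a c d by (simp add: Beta_real_pos flip: ln_mult_pos)
  moreover have "0 < beta_prime_density (a + c) d z" "0 < beta_prime_density a c v"
    "0 < beta_prime_density c d q" "0 < beta_prime_density a (c + d) r"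
    using q r v z_pos a c d by (simp_all add: beta_prime_density_pos)
  ultimately have "ln ((1 + q) / q * ((1 + v) * (beta_prime_density (a + c) d z * beta_prime_density a c v)))
      = ln (beta_prime_density c d q * beta_prime_density a (c + d) r)"
    using q r v z_pos a c d
    by (simp add: ln_mult_pos ln_divide_pos ln_beta_prime_density) (simp add: ln_v ln_1v ln_1z algebra_simps)
  then show ?thesis using q r v z_pos a c d by (simp add: beta_prime_density_pos flip: z_def)
qed

lemma image_divide_one_plus_Ioi: "(\<lambda>v::real. v / (1 + v)) ` {0<..} = {0<..<1}"
proof safe
  fix w :: real assume w: "w \<in> {0<..<1}"
  then have "w = (w / (1 - w)) / (1 + w / (1 - w))" and "w / (1 - w) \<in> {0<..}"
    by (auto simp: field_simps)
  then show "w \<in> (\<lambda>v. v / (1 + v)) ` {0<..}" by blast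
qed auto

lemma beta_density_has_integral:
  assumes "0 < p" "0 < q"
  shows "(beta_density p q has_integral 1) {0<..<1}"
proof -
  have "((\<lambda>x. x powr (p - 1) * (1 - x) powr (q - 1) / Beta p q) has_integral Beta p q / Beta p q) {0<..<1}"
    using has_integral_Beta_real[OF assms]
    by (intro has_integral_divide) (simp add: has_integral_Icc_iff_Ioo)
  then show ?thesis
    using Beta_real_pos[OF assms] by (subst has_integral_cong) (simp_all add: beta_density_eq)
qed

lemma beta_measure_eq_distr_beta_prime:
  assumes p: "0 < p" and q: "0 < q"
  shows "beta_measure p q = distr (beta_prime_measure p q) borel (\<lambda>v. v / (1 + v))"
proof (rule measure_eqI)
  fix A :: "real set" assume "A \<in> sets (beta_measure p q)"
  then have A[measurable]: "A \<in> sets borel" by simp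
  define f where "f w = beta_density p q w * indicator A w" for w
  have f_nonneg: "0 \<le> f w" for w
    using p q by (simp add: f_def)
  have f_int: "f absolutely_integrable_on {0<..<1}"
  proof (rule measurable_bounded_by_integrable_imp_absolutely_integrable)
    show "f \<in> borel_measurable (lebesgue_on {0<..<1})"
      unfolding f_def by (intro measurable_restrict_space1 measurable_completion) simp
    show "beta_density p q integrable_on {0<..<1}"
      using beta_density_has_integral[OF p q] by blast
  qed (use p q in \<open>auto simp: f_def indicator_def\<close>)
  have deriv: "((\<lambda>v. v / (1 + v)) has_field_derivative 1 / (1 + v)^2) (at v within {0<..})"
    if "v \<in> {0<..}" for v :: real
    using that by (auto intro!: derivative_eq_intros simp: field_simps power2_eq_square)
  have inj: "inj_on (\<lambda>v::real. v / (1 + v)) {0<..}"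
    by (rule inj_onI) (auto simp: frac_eq_eq algebra_simps)
  have change:
    "(\<integral>\<^sup>+w. ennreal (f w) * indicator {0<..<1} w \<partial>lborel)
     = (\<integral>\<^sup>+v. ennreal (\<bar>1 / (1 + v)^2\<bar> * f (v / (1 + v))) * indicator {0<..} v \<partial>lborel)"
    using nn_integral_change_of_variables_real[OF _ deriv inj, of f] f_int f_nonneg
    by (simp add: image_divide_one_plus_Ioi)
  have "emeasure (beta_measure p q) A = (\<integral>\<^sup>+w. ennreal (f w) * indicator {0<..<1} w \<partial>lborel)"
    unfolding beta_measure_def
    by (subst emeasure_density) (auto intro!: nn_integral_cong simp: f_def beta_density_def indicator_def)
  also have "\<dots> = (\<integral>\<^sup>+v. ennreal (beta_prime_density p q v) * indicator A (v / (1 + v)) \<partial>lborel)"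
    unfolding change
    by (intro nn_integral_cong) (simp add: f_def beta_prime_density_eq_beta_density p q indicator_def)
  also have "\<dots> = (\<integral>\<^sup>+v. indicator A (v / (1 + v)) \<partial>beta_prime_measure p q)"
    unfolding beta_prime_measure_def by (simp add: nn_integral_density)
  also have "\<dots> = emeasure (distr (beta_prime_measure p q) borel (\<lambda>v. v / (1 + v))) A"
    by (simp add: emeasure_distr_eq_nn_integral)
  finally show "emeasure (beta_measure p q) A = emeasure (distr (beta_prime_measure p q) borel (\<lambda>v. v / (1 + v))) A" .
qed simp

lemma nn_integral_beta_prime_density:
  assumes "0 < p" "0 < q"
  shows "(\<integral>\<^sup>+x. ennreal (beta_prime_density p q x) \<partial>lborel) = 1"
proof -
  have "(\<integral>\<^sup>+x. ennreal (beta_prime_density p q x) \<partial>lborel) = emeasure (beta_prime_measure p q) UNIV"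
    unfolding beta_prime_measure_def by (simp add: emeasure_density)
  also have "\<dots> = emeasure (beta_measure p q) UNIV"
    by (simp add: beta_measure_eq_distr_beta_prime[OF assms] emeasure_distr)
  also have "\<dots> = (\<integral>\<^sup>+x. ennreal (beta_density p q x) * indicator {0<..<1} x \<partial>lborel)"
    unfolding beta_measure_def
    by (auto simp: emeasure_density beta_density_def intro!: nn_integral_cong split: split_indicator)
  also have "\<dots> = 1"
    using beta_density_has_integral[OF assms] assms by (simp add: nn_integral_has_integral_lebesgue')
  finally show ?thesis .
qed

lemma nn_integral_pair_beta_prime_measure:
  assumes "0 < p" "0 < q" "0 < p'" "0 < q'"
    and [measurable]: "H \<in> borel_measurable (borel \<Otimes>\<^sub>M borel)"
  shows "(\<integral>\<^sup>+\<omega>. H \<omega> \<partial>(beta_prime_measure p q \<Otimes>\<^sub>M beta_prime_measure p' q'))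
       = (\<integral>\<^sup>+x. \<integral>\<^sup>+y. ennreal (beta_prime_density p q x * beta_prime_density p' q' y) * H (x, y)
            \<partial>lborel \<partial>lborel)"
proof -
  let ?f = "\<lambda>(x, y). ennreal (beta_prime_density p q x) * ennreal (beta_prime_density p' q' y)"
  have "beta_prime_measure p q \<Otimes>\<^sub>M beta_prime_measure p' q' = density (lborel \<Otimes>\<^sub>M lborel) ?f"
    unfolding beta_prime_measure_def
    by (rule pair_measure_density)
       (auto simp: sigma_finite_lborel sigma_finite_beta_prime_measure[unfolded beta_prime_measure_def])
  then have "(\<integral>\<^sup>+\<omega>. H \<omega> \<partial>(beta_prime_measure p q \<Otimes>\<^sub>M beta_prime_measure p' q'))
      = (\<integral>\<^sup>+\<omega>. ?f \<omega> * H \<omega> \<partial>(lborel \<Otimes>\<^sub>M lborel))"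
    by (simp add: nn_integral_density)
  also have "\<dots> = (\<integral>\<^sup>+x. \<integral>\<^sup>+y. ?f (x, y) * H (x, y) \<partial>lborel \<partial>lborel)"
    by (intro sigma_finite_measure.nn_integral_fst[OF sigma_finite_lborel, symmetric]) measurable
  finally show ?thesis
    using assms by (simp add: ennreal_mult')
qed

lemma nn_integral_beta_prime_mixture:
  assumes a: "0 < a" and b: "0 < b" and e: "0 < e"
  shows "(\<integral>\<^sup>+t. ennreal (beta_prime_density a (e + b) (x / (1 + t)) * beta_prime_density e b t / (1 + t)) \<partial>lborel)
       = ennreal (beta_prime_density a b x)"
proof (cases "0 < x")
  case False
  then have integrand: "beta_prime_density a (e + b) (x / (1 + t)) * beta_prime_density e b t / (1 + t) = 0" for t
    by (cases "0 < t") (simp_all add: divide_nonpos_pos)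
  show ?thesis using False by (simp only: integrand) simp
next
  case x: True
  have "(\<integral>\<^sup>+t. ennreal (beta_prime_density a (e + b) (x / (1 + t)) * beta_prime_density e b t / (1 + t)) * 1 \<partial>lborel)
      = (\<integral>\<^sup>+u. ennreal ((1 + x) * (beta_prime_density a (e + b) (x / (1 + (1 + x) * u))
            * beta_prime_density e b ((1 + x) * u) / (1 + (1 + x) * u))) * 1 \<partial>lborel)"
    using x by (intro nn_integral_lborel_rescale) auto
  also have "\<dots> = (\<integral>\<^sup>+u. ennreal (beta_prime_density a b x) * ennreal (beta_prime_density e (a + b) u) \<partial>lborel)"
  proof (rule nn_integral_cong)
    fix u :: real
    show "ennreal ((1 + x) * (beta_prime_density a (e + b) (x / (1 + (1 + x) * u))
            * beta_prime_density e b ((1 + x) * u) / (1 + (1 + x) * u))) * 1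
        = ennreal (beta_prime_density a b x) * ennreal (beta_prime_density e (a + b) u)"
    proof (cases "0 < u")
      case True
      then show ?thesis
        using beta_prime_density_mixture_identity[OF x True a b e] a b e by (simp add: ennreal_mult')
    next
      case False
      then show ?thesis using x by (simp add: mult_nonneg_nonpos)
    qed
  qed
  also have "\<dots> = ennreal (beta_prime_density a b x)"
    using a b e by (simp add: nn_integral_cmult nn_integral_beta_prime_density)
  finally show ?thesis by simp
qed

lemma distr_beta_prime_mult_one_plus:
  assumes a: "0 < a" and b: "0 < b" and e: "0 < e"
  shows "distr (beta_prime_measure a (e + b) \<Otimes>\<^sub>M beta_prime_measure e b) borel (\<lambda>(r, t). r * (1 + t))
       = beta_prime_measure a b"
proof (rule measure_eqI)
  fix A assume "A \<in> sets (distr (beta_prime_measure a (e + b) \<Otimes>\<^sub>M beta_prime_measure e b) borel (\<lambda>(r, t). r * (1 + t)))"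
  then have [measurable]: "A \<in> sets borel" by simp
  let ?f = "\<lambda>r t. beta_prime_density a (e + b) r * beta_prime_density e b t"
  have "emeasure (distr (beta_prime_measure a (e + b) \<Otimes>\<^sub>M beta_prime_measure e b) borel (\<lambda>(r, t). r * (1 + t))) A
      = (\<integral>\<^sup>+r. \<integral>\<^sup>+t. ennreal (?f r t) * indicator A (r * (1 + t)) \<partial>lborel \<partial>lborel)"
    using a b e by (simp add: emeasure_distr_eq_nn_integral nn_integral_pair_beta_prime_measure)
  also have "\<dots> = (\<integral>\<^sup>+t. \<integral>\<^sup>+r. ennreal (?f r t) * indicator A (r * (1 + t)) \<partial>lborel \<partial>lborel)"
    by (rule lborel_pair.Fubini'[symmetric]) measurable
  also have "\<dots> = (\<integral>\<^sup>+t. \<integral>\<^sup>+x. ennreal (?f (x / (1 + t)) t / (1 + t)) * indicator A x \<partial>lborel \<partial>lborel)"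
  proof (rule nn_integral_cong)
    fix t :: real
    show "(\<integral>\<^sup>+r. ennreal (?f r t) * indicator A (r * (1 + t)) \<partial>lborel)
        = (\<integral>\<^sup>+x. ennreal (?f (x / (1 + t)) t / (1 + t)) * indicator A x \<partial>lborel)"
    proof (cases "0 < t")
      case True
      then show ?thesis
        by (subst nn_integral_lborel_rescale[where c = "1 + t"]) (simp_all add: ac_simps)
    qed simp
  qed
  also have "\<dots> = (\<integral>\<^sup>+x. \<integral>\<^sup>+t. ennreal (?f (x / (1 + t)) t / (1 + t)) * indicator A x \<partial>lborel \<partial>lborel)"
    by (rule lborel_pair.Fubini') measurable
  also have "\<dots> = (\<integral>\<^sup>+x. ennreal (beta_prime_density a b x) * indicator A x \<partial>lborel)"
    using a b e by (simp add: nn_integral_multc nn_integral_beta_prime_mixture)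
  also have "\<dots> = emeasure (beta_prime_measure a b) A"
    unfolding beta_prime_measure_def by (simp add: emeasure_density)
  finally show "emeasure (distr (beta_prime_measure a (e + b) \<Otimes>\<^sub>M beta_prime_measure e b) borel (\<lambda>(r, t). r * (1 + t))) A
      = emeasure (beta_prime_measure a b) A" .
qed simp

lemma nn_integral_beta_prime_slice:
  assumes q: "0 < q" and a: "0 < a" and c: "0 < c" and d: "0 < d"
    and [measurable]: "h \<in> borel_measurable (borel \<Otimes>\<^sub>M borel)"
  shows "(\<integral>\<^sup>+v. ennreal ((1 + v) * (beta_prime_density (a + c) d ((1 + v) * q) * beta_prime_density a c v))
            * h ((1 + v) * q, v) \<partial>lborel)
       = (\<integral>\<^sup>+r. ennreal (beta_prime_density c d q * beta_prime_density a (c + d) r)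
            * h (q + (1 + q) * r, (1 + q) * r / q) \<partial>lborel)"
proof -
  let ?v = "\<lambda>r. (1 + q) / q * r"
  have "(\<integral>\<^sup>+v. ennreal ((1 + v) * (beta_prime_density (a + c) d ((1 + v) * q) * beta_prime_density a c v))
            * h ((1 + v) * q, v) \<partial>lborel)
      = (\<integral>\<^sup>+r. ennreal ((1 + q) / q * ((1 + ?v r)
            * (beta_prime_density (a + c) d ((1 + ?v r) * q) * beta_prime_density a c (?v r))))
            * h ((1 + ?v r) * q, ?v r) \<partial>lborel)"
    using q by (intro nn_integral_lborel_rescale) auto
  also have "\<dots> = (\<integral>\<^sup>+r. ennreal (beta_prime_density c d q * beta_prime_density a (c + d) r)
            * h (q + (1 + q) * r, (1 + q) * r / q) \<partial>lborel)"
  proof (rule nn_integral_cong)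
    fix r :: real
    have "(1 + ?v r) * q = q + (1 + q) * r" and "?v r = (1 + q) * r / q"
      using q by (simp_all add: field_simps)
    moreover have "?v r \<le> 0" if "\<not> 0 < r"
      using q that by (intro mult_nonneg_nonpos) auto
    ultimately show "ennreal ((1 + q) / q * ((1 + ?v r)
            * (beta_prime_density (a + c) d ((1 + ?v r) * q) * beta_prime_density a c (?v r))))
            * h ((1 + ?v r) * q, ?v r)
        = ennreal (beta_prime_density c d q * beta_prime_density a (c + d) r)
            * h (q + (1 + q) * r, (1 + q) * r / q)"
      using beta_prime_density_pair_identity[OF q _ a c d, of r] by (cases "0 < r") simp_all
  qed
  finally show ?thesis .
qed

lemma pair_beta_prime_eq_distr:
  assumes a: "0 < a" and c: "0 < c" and d: "0 < d"
  shows "beta_prime_measure (a + c) d \<Otimes>\<^sub>M beta_prime_measure a c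
       = distr (beta_prime_measure c d \<Otimes>\<^sub>M beta_prime_measure a (c + d)) (borel \<Otimes>\<^sub>M borel)
           (\<lambda>(q, r). (q + (1 + q) * r, (1 + q) * r / q))"
    (is "?ZV = distr ?QR _ ?\<Psi>")
proof (rule measure_eqI)
  fix A assume "A \<in> sets ?ZV"
  then have [measurable]: "A \<in> sets (borel \<Otimes>\<^sub>M borel)" by simp
  let ?f = "\<lambda>z v. beta_prime_density (a + c) d z * beta_prime_density a c v"
  have "emeasure ?ZV A = (\<integral>\<^sup>+\<omega>. indicator A \<omega> \<partial>?ZV)"
    by simp
  also have "\<dots> = (\<integral>\<^sup>+z. \<integral>\<^sup>+v. ennreal (?f z v) * indicator A (z, v) \<partial>lborel \<partial>lborel)"
    using a c d by (intro nn_integral_pair_beta_prime_measure) auto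
  also have "\<dots> = (\<integral>\<^sup>+v. \<integral>\<^sup>+z. ennreal (?f z v) * indicator A (z, v) \<partial>lborel \<partial>lborel)"
    by (rule lborel_pair.Fubini'[symmetric]) measurable
  also have "\<dots> = (\<integral>\<^sup>+v. \<integral>\<^sup>+q. ennreal ((1 + v) * ?f ((1 + v) * q) v) * indicator A ((1 + v) * q, v)
                      \<partial>lborel \<partial>lborel)"
  proof (rule nn_integral_cong)
    fix v :: real
    show "(\<integral>\<^sup>+z. ennreal (?f z v) * indicator A (z, v) \<partial>lborel)
        = (\<integral>\<^sup>+q. ennreal ((1 + v) * ?f ((1 + v) * q) v) * indicator A ((1 + v) * q, v) \<partial>lborel)"
    proof (cases "0 < v")
      case True
      then show ?thesis by (intro nn_integral_lborel_rescale) auto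
    qed simp
  qed
  also have "\<dots> = (\<integral>\<^sup>+q. \<integral>\<^sup>+v. ennreal ((1 + v) * ?f ((1 + v) * q) v) * indicator A ((1 + v) * q, v)
                      \<partial>lborel \<partial>lborel)"
    by (rule lborel_pair.Fubini') measurable
  also have "\<dots> = (\<integral>\<^sup>+q. \<integral>\<^sup>+r. ennreal (beta_prime_density c d q * beta_prime_density a (c + d) r)
                      * indicator A (?\<Psi> (q, r)) \<partial>lborel \<partial>lborel)"
  proof (rule nn_integral_cong)
    fix q :: real
    show "(\<integral>\<^sup>+v. ennreal ((1 + v) * ?f ((1 + v) * q) v) * indicator A ((1 + v) * q, v) \<partial>lborel)
        = (\<integral>\<^sup>+r. ennreal (beta_prime_density c d q * beta_prime_density a (c + d) r)
            * indicator A (?\<Psi> (q, r)) \<partial>lborel)"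
    proof (cases "0 < q")
      case True
      then show ?thesis using nn_integral_beta_prime_slice[OF True a c d, of "indicator A"] by simp
    next
      case False
      then have vanish: "?f ((1 + v) * q) v = 0" for v
        by (cases "0 < v") (simp_all add: mult_nonneg_nonpos)
      show ?thesis using False by (simp only: vanish) simp
    qed
  qed
  also have "\<dots> = emeasure (distr ?QR (borel \<Otimes>\<^sub>M borel) ?\<Psi>) A"
    using a c d by (simp add: emeasure_distr_eq_nn_integral nn_integral_pair_beta_prime_measure)
  finally show "emeasure ?ZV A = emeasure (distr ?QR (borel \<Otimes>\<^sub>M borel) ?\<Psi>) A" .
qed simp

lemma pair_beta_prime_beta_eq_distr:
  assumes a: "0 < a" and c: "0 < c" and d: "0 < d"
  shows "beta_prime_measure (a + c) d \<Otimes>\<^sub>M beta_measure a c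
       = distr (beta_prime_measure c d \<Otimes>\<^sub>M beta_prime_measure a (c + d)) (borel \<Otimes>\<^sub>M borel)
           (\<lambda>(q, r). (q + (1 + q) * r, (1 + q) * r / (q + (1 + q) * r)))"
proof -
  let ?QR = "beta_prime_measure c d \<Otimes>\<^sub>M beta_prime_measure a (c + d)"
  have sf: "sigma_finite_measure (distr (beta_prime_measure a c) borel (\<lambda>v. v / (1 + v)))"
    using sigma_finite_beta_measure[of a c] by (simp only: beta_measure_eq_distr_beta_prime[OF a c])
  have "beta_prime_measure (a + c) d \<Otimes>\<^sub>M beta_measure a c
      = distr (beta_prime_measure (a + c) d) borel (\<lambda>z. z)
          \<Otimes>\<^sub>M distr (beta_prime_measure a c) borel (\<lambda>v. v / (1 + v))"
    by (simp add: beta_measure_eq_distr_beta_prime[OF a c] distr_id2)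
  also have "\<dots> = distr (beta_prime_measure (a + c) d \<Otimes>\<^sub>M beta_prime_measure a c) (borel \<Otimes>\<^sub>M borel)
          (\<lambda>(z, v). (z, v / (1 + v)))"
    by (rule pair_measure_distr[OF _ _ sf]) auto
  also have "\<dots> = distr ?QR (borel \<Otimes>\<^sub>M borel)
          (\<lambda>(q, r). (q + (1 + q) * r, (1 + q) * r / q / (1 + (1 + q) * r / q)))"
    by (simp add: pair_beta_prime_eq_distr[OF a c d] distr_distr comp_def split_beta')
  also have "\<dots> = distr ?QR (borel \<Otimes>\<^sub>M borel) (\<lambda>(q, r). (q + (1 + q) * r, (1 + q) * r / (q + (1 + q) * r)))"
  proof (rule distr_cong_AE)
    have identity: "(1 + q) * r / q / (1 + (1 + q) * r / q) = (1 + q) * r / (q + (1 + q) * r)"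
      if "0 < q" for q r :: real
    proof -
      have "1 + (1 + q) * r / q = (q + (1 + q) * r) / q" using that by (simp add: field_simps)
      then show ?thesis using that by simp
    qed
    have "AE \<omega> in ?QR. 0 < fst \<omega> \<and> 0 < snd \<omega>"
      by (intro AE_pair_measure_fst_snd AE_beta_prime_measure_pos sigma_finite_beta_prime_measure) auto
    then show "AE \<omega> in ?QR. (\<lambda>(q, r). (q + (1 + q) * r, (1 + q) * r / q / (1 + (1 + q) * r / q))) \<omega>
        = (\<lambda>(q, r). (q + (1 + q) * r, (1 + q) * r / (q + (1 + q) * r))) \<omega>"
      by eventually_elim (auto simp only: identity fst_conv snd_conv split: prod.splits)
  qed simp_all
  finally show ?thesis .
qed

lemma distr_beta_prime_mult_one_plus_beta_mult:
  assumes a: "0 < a" and b: "0 < b" and c: "0 < c" and d: "0 < d" and e: "0 < e"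
  shows "distr (beta_prime_measure (a + c) d \<Otimes>\<^sub>M (beta_measure a c \<Otimes>\<^sub>M beta_prime_measure e b)) borel
           (\<lambda>(z, u, t). z * (1 + u * t))
       = distr (beta_prime_measure c d \<Otimes>\<^sub>M (beta_prime_measure a (c + d) \<Otimes>\<^sub>M beta_prime_measure e b)) borel
           (\<lambda>(q, r, t). q + (1 + q) * (r * (1 + t)))"
proof -
  note sigma_finite = sigma_finite_beta_measure sigma_finite_beta_prime_measure
    sigma_finite_pair_measure[OF sigma_finite_beta_prime_measure sigma_finite_beta_prime_measure]
  let ?QR = "beta_prime_measure c d \<Otimes>\<^sub>M beta_prime_measure a (c + d)"
  let ?\<Psi> = "\<lambda>(q, r). (q + (1 + q) * r, (1 + q) * r / (q + (1 + q) * r))"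
  have "distr (beta_prime_measure (a + c) d \<Otimes>\<^sub>M (beta_measure a c \<Otimes>\<^sub>M beta_prime_measure e b)) borel
           (\<lambda>(z, u, t). z * (1 + u * t))
      = distr ((beta_prime_measure (a + c) d \<Otimes>\<^sub>M beta_measure a c) \<Otimes>\<^sub>M beta_prime_measure e b) borel
           (\<lambda>((z, u), t). z * (1 + u * t))"
    by (subst distr_pair_measure_assoc) (simp_all add: sigma_finite)
  also have "\<dots> = distr (distr ?QR (borel \<Otimes>\<^sub>M borel) ?\<Psi> \<Otimes>\<^sub>M beta_prime_measure e b) borel
           (\<lambda>((z, u), t). z * (1 + u * t))"
    by (simp only: pair_beta_prime_beta_eq_distr[OF a c d])
  also have "\<dots> = distr (?QR \<Otimes>\<^sub>M beta_prime_measure e b) borel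
           (\<lambda>(w, t). (\<lambda>((z, u), t). z * (1 + u * t)) (?\<Psi> w, t))"
    by (rule distr_pair_measure_distr_left) (simp_all add: sigma_finite split_beta')
  also have "\<dots> = distr (?QR \<Otimes>\<^sub>M beta_prime_measure e b) borel
           (\<lambda>((q, r), t). q + (1 + q) * (r * (1 + t)))"
  proof (rule distr_cong_AE)
    have identity: "(q + (1 + q) * r) * (1 + (1 + q) * r * t / (q + (1 + q) * r)) = q + (1 + q) * (r * (1 + t))"
      if "0 < q" "0 < r" for q r t :: real
    proof -
      have "0 < q + (1 + q) * r" using that by (simp add: add_pos_pos)
      then show ?thesis by (simp add: field_simps)
    qed
    have "AE \<omega> in ?QR \<Otimes>\<^sub>M beta_prime_measure e b. (0 < fst (fst \<omega>) \<and> 0 < snd (fst \<omega>)) \<and> True"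
      by (intro AE_pair_measure_fst_snd AE_beta_prime_measure_pos sigma_finite AE_I2) auto
    then show "AE \<omega> in ?QR \<Otimes>\<^sub>M beta_prime_measure e b.
        (\<lambda>(w, t). (\<lambda>((z, u), t). z * (1 + u * t)) (?\<Psi> w, t)) \<omega>
      = (\<lambda>((q, r), t). q + (1 + q) * (r * (1 + t))) \<omega>"
      by eventually_elim (auto simp: identity)
  qed (simp_all add: split_beta')
  also have "\<dots> = distr (beta_prime_measure c d \<Otimes>\<^sub>M (beta_prime_measure a (c + d) \<Otimes>\<^sub>M beta_prime_measure e b)) borel
           (\<lambda>(q, r, t). q + (1 + q) * (r * (1 + t)))"
    by (subst distr_pair_measure_assoc) (simp_all add: sigma_finite)
  finally show ?thesis .
qed

theorem proposition8:
  fixes a b c d :: real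
  assumes "0 < a" "0 < b" "0 < c" "0 < d" "b < c + d"
  shows "distr (beta_prime_measure a b \<Otimes>\<^sub>M beta_prime_measure c d) borel
            (\<lambda>(x, y). (1 + x) * (1 + y) - 1)
       = distr (beta_prime_measure (a + c) d \<Otimes>\<^sub>M
                  (beta_measure a c \<Otimes>\<^sub>M beta_prime_measure (c + d - b) b)) borel
            (\<lambda>(x, u, v). x * (1 + u * v))"
proof -
  let ?T = "beta_prime_measure (c + d - b) b"
  have mult_one_plus:
    "distr (beta_prime_measure a (c + d) \<Otimes>\<^sub>M ?T) borel (\<lambda>(r, t). r * (1 + t)) = beta_prime_measure a b"
    using distr_beta_prime_mult_one_plus[of a b "c + d - b"] assms by simp
  have "distr (beta_prime_measure a b \<Otimes>\<^sub>M beta_prime_measure c d) borel (\<lambda>(x, y). (1 + x) * (1 + y) - 1)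
      = distr (beta_prime_measure c d \<Otimes>\<^sub>M beta_prime_measure a b) borel (\<lambda>(q, x). q + (1 + q) * x)"
    by (subst distr_pair_measure_swap)
       (auto simp: sigma_finite_beta_prime_measure algebra_simps intro!: distr_cong)
  also have "\<dots> = distr (beta_prime_measure c d \<Otimes>\<^sub>M
      distr (beta_prime_measure a (c + d) \<Otimes>\<^sub>M ?T) borel (\<lambda>(r, t). r * (1 + t))) borel
      (\<lambda>(q, x). q + (1 + q) * x)"
    by (simp only: mult_one_plus)
  also have "\<dots> = distr (beta_prime_measure c d \<Otimes>\<^sub>M (beta_prime_measure a (c + d) \<Otimes>\<^sub>M ?T)) borel
      (\<lambda>(q, r, t). q + (1 + q) * (r * (1 + t)))"
    by (subst distr_pair_measure_distr_right)
       (auto simp: mult_one_plus sigma_finite_beta_prime_measure intro!: distr_cong)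
  also have "\<dots> = distr (beta_prime_measure (a + c) d \<Otimes>\<^sub>M (beta_measure a c \<Otimes>\<^sub>M ?T)) borel
      (\<lambda>(x, u, v). x * (1 + u * v))"
    by (rule distr_beta_prime_mult_one_plus_beta_mult[symmetric]) (use assms in auto)
  finally show ?thesis .
qed

end
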